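(* Let $v_1\ge v_2\ge\cdots\ge v_n\ge 0$ be reals with $v_1>0$, and let $k=\max\{i:v_i>v_1/2\}$. For each $i\in[n]$ define $$B_i=\frac{\log_2^\dagger(2v_i/v_1)}{k+1}+\sum_{j=1}^k\frac{\log_2^\dagger(v_i/v_j)}{j(j+1)}.$$ Then $\sum_{i=1}^nB_i\le1$.
   Context: $\log_2^\dagger(\alpha)=\max(0,\min(1,\log_2\alpha))$ for $\alpha\ge 0$, with $\log_2 0=-\infty$ (so $\log_2^\dagger(0)=0$). *)

theory Defs
  imports Complex_Main
begin

text \<open>Truncated binary logarithm: max(0, min(1, log2 a)) for a \<ge> 0, with log2 0 = -infinity,
  so the value at 0 is 0.\<close>
definition log2dag :: "real \<Rightarrow> real" where
  "log2dag a = (if a \<le> 0 then 0 else max 0 (min 1 (log 2 a)))"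

end

theory Submission
  imports Defs
begin

text \<open>Write \<open>a\<^sub>i = log\<^sub>2 v\<^sub>i\<close>. The terms with \<open>i > k\<close> vanish, and for
  \<open>i, j \<le> k\<close> all ratios \<open>v\<^sub>i / v\<^sub>j\<close> lie in \<open>(1/2, 2)\<close>, so the truncations in
  \<open>log\<^sub>2\<^sup>\<dagger>\<close> disappear except for \<open>max 0\<close>. With the gaps \<open>d\<^sub>i = a\<^sub>1 - a\<^sub>i \<ge> 0\<close>, which
  increase in \<open>i\<close>, the double sum becomes
  \<open>\<Sum>\<^sub>j (\<Sum>\<^sub>i\<^sub>\<le>\<^sub>j (d\<^sub>j - d\<^sub>i)) / (j(j+1))\<close>; this telescopes to
  \<open>(\<Sum>\<^sub>i d\<^sub>i)/(k+1) - \<Sum>\<^sub>j d\<^sub>j/(j(j+1))\<close>, and the first part cancels against the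
  \<open>-d\<^sub>i/(k+1)\<close> contributions of the first summand of \<open>B\<^sub>i\<close>. What remains is
  \<open>k/(k+1) - \<Sum>\<^sub>j d\<^sub>j/(j(j+1)) \<le> 1\<close>.\<close>

lemma log2dag_eq_0: "x \<le> 1 \<Longrightarrow> log2dag x = 0"
  unfolding log2dag_def by auto

lemma log2dag_eq_max_log:
  assumes "0 < x" "x \<le> 2"
  shows "log2dag x = max 0 (log 2 x)"
proof -
  have "log 2 x \<le> 1"
    using assms log_le_cancel_iff[of 2 x 2] by simp
  then show ?thesis
    using assms unfolding log2dag_def by auto
qed

lemma log2dag_divide:
  assumes "0 < x" "0 < y" "x \<le> 2 * y"
  shows "log2dag (x / y) = max 0 (log 2 x - log 2 y)"
  using assms by (simp add: log2dag_eq_max_log log_divide field_simps)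

lemma sum_max_diff_antimono:
  fixes a :: "nat \<Rightarrow> real"
  assumes "antimono_on {1..k} a" and "j \<in> {1..k}"
  shows "(\<Sum>i=1..k. max 0 (a i - a j)) = (\<Sum>i=1..j. a i - a j)"
proof -
  have anti: "a i' \<le> a i" if "i \<in> {1..k}" "i' \<in> {1..k}" "i \<le> i'" for i i'
    using assms(1) that by (simp add: monotone_on_def)
  have "{1..k} = {1..j} \<union> {Suc j..k}"
    using assms(2) by auto
  then have "(\<Sum>i=1..k. max 0 (a i - a j))
      = (\<Sum>i=1..j. max 0 (a i - a j)) + (\<Sum>i=Suc j..k. max 0 (a i - a j))"
    by (simp add: sum.union_disjoint)
  also have "(\<Sum>i=Suc j..k. max 0 (a i - a j)) = 0"
    using assms(2) anti by (intro sum.neutral) auto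
  also have "(\<Sum>i=1..j. max 0 (a i - a j)) = (\<Sum>i=1..j. a i - a j)"
    using assms(2) anti by (intro sum.cong) auto
  finally show ?thesis by simp
qed

lemma sum_gaps_telescope:
  fixes d :: "nat \<Rightarrow> real"
  shows "(\<Sum>j=1..k. (\<Sum>i=1..j. d j - d i) / (real j * real (j + 1)))
       = (\<Sum>i=1..k. d i) / real (k + 1) - (\<Sum>j=1..k. d j / (real j * real (j + 1)))"
proof (induction k)
  case 0
  then show ?case by simp
next
  case (Suc k)
  define D where "D = (\<Sum>i=1..k. d i)"
  have "(\<Sum>i=1..Suc k. d (Suc k) - d i) = real k * d (Suc k) - D"
    by (simp add: sum_subtractf D_def algebra_simps)
  moreover have "D / real (k + 1) + (real k * d (Suc k) - D) / (real (Suc k) * real (Suc k + 1))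
      = (D + d (Suc k)) / real (Suc k + 1) - d (Suc k) / (real (Suc k) * real (Suc k + 1))"
    by (simp add: field_simps add_nonneg_eq_0_iff)
  ultimately show ?case
    using Suc.IH by (simp add: D_def)
qed

lemma log_weights_sum_le_1:
  fixes a :: "nat \<Rightarrow> real"
  assumes anti: "antimono_on {1..k} a"
  shows "(\<Sum>i=1..k. (1 + a i - a 1) / real (k + 1)
           + (\<Sum>j=1..k. max 0 (a i - a j) / (real j * real (j + 1)))) \<le> 1"
proof -
  define w where "w j = real j * real (j + 1)" for j
  define d where "d i = a 1 - a i" for i
  have d_nonneg: "0 \<le> d j" if "j \<in> {1..k}" for j
    using anti that unfolding d_def by (auto simp: monotone_on_def)
  have "(\<Sum>i=1..k. \<Sum>j=1..k. max 0 (a i - a j) / w j)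
      = (\<Sum>j=1..k. (\<Sum>i=1..k. max 0 (a i - a j)) / w j)"
    by (subst sum.swap) (simp add: sum_divide_distrib)
  also have "\<dots> = (\<Sum>j=1..k. (\<Sum>i=1..j. d j - d i) / w j)"
  proof (rule sum.cong[OF refl])
    fix j assume "j \<in> {1..k}"
    then show "(\<Sum>i=1..k. max 0 (a i - a j)) / w j = (\<Sum>i=1..j. d j - d i) / w j"
      unfolding sum_max_diff_antimono[OF anti \<open>j \<in> {1..k}\<close>] d_def by simp
  qed
  also have "\<dots> = (\<Sum>i=1..k. d i) / real (k + 1) - (\<Sum>j=1..k. d j / w j)"
    unfolding w_def by (rule sum_gaps_telescope)
  finally have double_sum: "(\<Sum>i=1..k. \<Sum>j=1..k. max 0 (a i - a j) / w j)
      = (\<Sum>i=1..k. d i) / real (k + 1) - (\<Sum>j=1..k. d j / w j)" .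
  have "(\<Sum>i=1..k. (1 + a i - a 1) / real (k + 1)) = (real k - (\<Sum>i=1..k. d i)) / real (k + 1)"
    by (simp add: d_def sum_divide_distrib[symmetric] sum.distrib sum_subtractf algebra_simps)
  with double_sum have "(\<Sum>i=1..k. (1 + a i - a 1) / real (k + 1)
           + (\<Sum>j=1..k. max 0 (a i - a j) / (real j * real (j + 1))))
      = real k / real (k + 1) - (\<Sum>j=1..k. d j / w j)"
    by (simp add: sum.distrib w_def diff_divide_distrib)
  moreover have "0 \<le> (\<Sum>j=1..k. d j / w j)"
    using d_nonneg by (intro sum_nonneg) (simp add: w_def)
  moreover have "real k / real (k + 1) \<le> 1"
    by simp
  ultimately show ?thesis
    by linarith
qed

lemma Collect_atLeastAtMost_eq_atLeastAtMost_Max: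
  fixes P :: "nat \<Rightarrow> bool"
  assumes "P 1" "1 \<le> n"
    and down: "\<And>i j. 1 \<le> i \<Longrightarrow> i \<le> j \<Longrightarrow> j \<le> n \<Longrightarrow> P j \<Longrightarrow> P i"
  shows "{i \<in> {1..n}. P i} = {1..Max {i \<in> {1..n}. P i}}"
proof -
  define K where "K = {i \<in> {1..n}. P i}"
  have "finite K" "1 \<in> K"
    using assms(1,2) unfolding K_def by auto
  then have "Max K \<in> K"
    using Max_in by blast
  then have "{1..Max K} \<subseteq> K"
    using down unfolding K_def by auto
  moreover have "K \<subseteq> {1..Max K}"
    using \<open>finite K\<close> unfolding K_def by auto
  ultimately show ?thesis
    unfolding K_def by blast
qed

lemma log2dag_weights_sum_le_1:
  fixes v :: "nat \<Rightarrow> real"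
  assumes anti: "antimono_on {1..n} v" and v1: "0 < v 1"
    and k: "{i \<in> {1..n}. v 1 / 2 < v i} = {1..k}"
  shows "(\<Sum>i=1..n. log2dag (2 * v i / v 1) / real (k + 1)
           + (\<Sum>j=1..k. log2dag (v i / v j) / (real j * real (j + 1)))) \<le> 1"
proof -
  define a where "a i = log 2 (v i)" for i
  define B where "B i = log2dag (2 * v i / v 1) / real (k + 1)
           + (\<Sum>j=1..k. log2dag (v i / v j) / (real j * real (j + 1)))" for i
  have large_iff: "i \<in> {1..n} \<and> v 1 / 2 < v i \<longleftrightarrow> i \<in> {1..k}" for i
    using k by blast
  have "k \<le> n"
    using large_iff[of k] by (cases "k = 0") auto
  have large: "v 1 / 2 < v i" "0 < v i" "i \<le> n" if "i \<in> {1..k}" for i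
    using large_iff[of i] that v1 by auto
  have v_le_v1: "v i \<le> v 1" if "i \<in> {1..n}" for i
    using anti that by (auto simp: monotone_on_def)
  have small: "v i \<le> v 1 / 2" if "i \<in> {k<..n}" for i
    using large_iff[of i] that by auto
  have B_above: "B i = 0" if "i \<in> {k<..n}" for i
  proof -
    have "log2dag (v i / v j) = 0" if "j \<in> {1..k}" for j
      using small[OF \<open>i \<in> {k<..n}\<close>] large[OF that] by (intro log2dag_eq_0) simp
    moreover have "log2dag (2 * v i / v 1) = 0"
      using small[OF that] v1 by (intro log2dag_eq_0) simp
    ultimately show ?thesis
      unfolding B_def by simp
  qed
  have "{1..n} = {1..k} \<union> {k<..n}"
    using \<open>k \<le> n\<close> by auto
  then have "(\<Sum>i=1..n. B i) = (\<Sum>i=1..k. B i) + (\<Sum>i\<in>{k<..n}. B i)"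
    by (simp add: sum.union_disjoint ivl_disj_int)
  also have "\<dots> = (\<Sum>i=1..k. B i)"
    using B_above by simp
  also have "\<dots> = (\<Sum>i=1..k. (1 + a i - a 1) / real (k + 1)
           + (\<Sum>j=1..k. max 0 (a i - a j) / (real j * real (j + 1))))"
  proof (rule sum.cong[OF refl])
    fix i assume i: "i \<in> {1..k}"
    have vi: "0 < v i" "v i \<le> v 1"
      using i large[OF i] v_le_v1 by auto
    have "log 2 (v 1) < log 2 (2 * v i)"
      using large(1)[OF i] v1 by simp
    then have "log2dag (2 * v i / v 1) = 1 + a i - a 1"
      using vi v1 by (simp add: log2dag_divide log_mult a_def)
    moreover have "log2dag (v i / v j) = max 0 (a i - a j)" if "j \<in> {1..k}" for j
      using vi large[OF that] unfolding a_def by (intro log2dag_divide) auto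
    ultimately show "B i = (1 + a i - a 1) / real (k + 1)
           + (\<Sum>j=1..k. max 0 (a i - a j) / (real j * real (j + 1)))"
      unfolding B_def by simp
  qed
  also have "\<dots> \<le> 1"
  proof (rule log_weights_sum_le_1)
    show "antimono_on {1..k} a"
    proof (rule monotone_onI)
      fix i j assume "i \<in> {1..k}" "j \<in> {1..k}" "i \<le> j"
      then have "v j \<le> v i"
        using anti large by (auto simp: monotone_on_def)
      then show "a j \<le> a i"
        using large(2)[OF \<open>j \<in> {1..k}\<close>] by (simp add: a_def)
    qed
  qed
  finally show ?thesis
    unfolding B_def .
qed

theorem mainTheorem12:
  fixes v :: "nat \<Rightarrow> real" and n :: nat
  assumes "n \<ge> 1"
    and "\<And>i. 1 \<le> i \<Longrightarrow> i < n \<Longrightarrow> v i \<ge> v (Suc i)"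
    and "v n \<ge> 0"
    and "v 1 > 0"
  shows "let k = Max {i \<in> {1..n}. v i > v 1 / 2};
             B = (\<lambda>i. log2dag (2 * v i / v 1) / real (k + 1)
                   + (\<Sum>j = 1..k. log2dag (v i / v j) / (real j * real (j + 1))))
         in (\<Sum>i = 1..n. B i) \<le> 1"
proof -
  have anti: "antimono_on {1..n} v"
  proof (rule monotone_onI)
    fix i j :: nat assume ij: "i \<in> {1..n}" "j \<in> {1..n}" "i \<le> j"
    show "v j \<le> v i"
      by (rule lift_Suc_antimono_le_ivl[of "{1..<n}"]) (use assms(2) ij in auto)
  qed
  have "{i \<in> {1..n}. v 1 / 2 < v i} = {1..Max {i \<in> {1..n}. v 1 / 2 < v i}}"
  proof (rule Collect_atLeastAtMost_eq_atLeastAtMost_Max)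
    fix i j :: nat assume "1 \<le> i" "i \<le> j" "j \<le> n" "v 1 / 2 < v j"
    then show "v 1 / 2 < v i"
      using monotone_onD[OF anti, of i j] by simp
  qed (use assms(1,4) in auto)
  from log2dag_weights_sum_le_1[OF anti assms(4) this]
  show ?thesis
    unfolding Let_def by simp
qed

end
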